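(* Every uniform space $(X,\mathcal U)$ is rotund.
   Context: Entourages are subsets of $X\times X$ containing the diagonal; $U\circ V=\{(x,z):\exists y\,((x,y)\in U,(y,z)\in V)\}$, $U^{-1}=\{(y,x):(x,y)\in U\}$, $B(x;U)=\{y:(x,y)\in U\}$, $B(A;U)=\bigcup_{a\in A}B(a;U)$. A uniformity is a family $\mathcal U$ of entourages closed under supersets, with any two members containing a common member, each $U\in\mathcal U$ containing $V\circ V$ for some $V\in\mathcal U$, and with $U^{-1}\in\mathcal U$ for all $U\in\mathcal U$; its topology: $W$ open iff each $x\in W$ has $B(x;U)\subset W$ for some $U\in\mathcal U$. A base of $\mathcal U$ is a subfamily such that each member of $\mathcal U$ contains one of its members; it is multiplicative if closed under $\circ$ and rotund if $B(\overline A;U)\subset\overline{B(A;W\circ U)}$ for all $A\subset X$ and all $U,W$ in the base (closures in the generated topology). $(X,\mathcal U)$ is rotund if $\mathcal U$ has a rotund multiplicative base. *)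

theory Defs
  imports "HOL-Analysis.Analysis"
begin

text \<open>Composition U \<circ> V of the paper is the relational composition U O V,
  B(x;U) is U `` {x} and B(A;U) is U `` A.\<close>

definition uniformity :: "'a set \<Rightarrow> ('a \<times> 'a) set set \<Rightarrow> bool" where
  "uniformity X \<U> \<longleftrightarrow>
     (\<forall>U\<in>\<U>. Id_on X \<subseteq> U \<and> U \<subseteq> X \<times> X) \<and>
     (\<forall>U\<in>\<U>. \<forall>V. U \<subseteq> V \<and> V \<subseteq> X \<times> X \<longrightarrow> V \<in> \<U>) \<and>
     (\<forall>U\<in>\<U>. \<forall>V\<in>\<U>. \<exists>W\<in>\<U>. W \<subseteq> U \<and> W \<subseteq> V) \<and>
     (\<forall>U\<in>\<U>. \<exists>V\<in>\<U>. V O V \<subseteq> U) \<and>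
     (\<forall>U\<in>\<U>. converse U \<in> \<U>)"

definition utopology :: "'a set \<Rightarrow> ('a \<times> 'a) set set \<Rightarrow> 'a topology" where
  "utopology X \<U> = topology (\<lambda>W. W \<subseteq> X \<and> (\<forall>x\<in>W. \<exists>U\<in>\<U>. U `` {x} \<subseteq> W))"

definition is_base :: "('a \<times> 'a) set set \<Rightarrow> ('a \<times> 'a) set set \<Rightarrow> bool" where
  "is_base \<U> \<B> \<longleftrightarrow> \<B> \<subseteq> \<U> \<and> (\<forall>U\<in>\<U>. \<exists>V\<in>\<B>. V \<subseteq> U)"

definition multiplicative :: "('a \<times> 'a) set set \<Rightarrow> bool" where
  "multiplicative \<B> \<longleftrightarrow> (\<forall>U\<in>\<B>. \<forall>V\<in>\<B>. U O V \<in> \<B>)"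

definition rotund_base :: "'a set \<Rightarrow> ('a \<times> 'a) set set \<Rightarrow> ('a \<times> 'a) set set \<Rightarrow> bool" where
  "rotund_base X \<U> \<B> \<longleftrightarrow>
     (\<forall>A. A \<subseteq> X \<longrightarrow> (\<forall>U\<in>\<B>. \<forall>W\<in>\<B>.
        U `` (utopology X \<U> closure_of A) \<subseteq> utopology X \<U> closure_of ((W O U) `` A)))"

definition rotund :: "'a set \<Rightarrow> ('a \<times> 'a) set set \<Rightarrow> bool" where
  "rotund X \<U> \<longleftrightarrow> (\<exists>\<B>. is_base \<U> \<B> \<and> multiplicative \<B> \<and> rotund_base X \<U> \<B>)"

end

theory Submission
  imports Defs
begin

text \<open>The uniformity itself is a rotund multiplicative base. It is closed under composition
  because entourages contain the diagonal. And if \<open>x\<close> lies in the closure of \<open>A\<close>, the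
  \<open>W\<inverse>\<close>-ball around \<open>x\<close> meets \<open>A\<close>, so \<open>B(x;U) \<subseteq> B(A;W \<circ> U)\<close>: the inclusion
  \<open>B(cl A;U) \<subseteq> cl B(A;W \<circ> U)\<close> holds even without the closure on the right.\<close>

lemma
  assumes "uniformity X \<U>" and U: "U \<in> \<U>"
  shows entourage_subset: "U \<subseteq> X \<times> X"
    and entourage_refl: "x \<in> X \<Longrightarrow> (x, x) \<in> U"
    and entourage_superset: "U \<subseteq> V \<Longrightarrow> V \<subseteq> X \<times> X \<Longrightarrow> V \<in> \<U>"
    and entourage_Int: "V \<in> \<U> \<Longrightarrow> \<exists>W\<in>\<U>. W \<subseteq> U \<and> W \<subseteq> V"
    and entourage_half: "\<exists>V\<in>\<U>. V O V \<subseteq> U"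
    and entourage_converse: "converse U \<in> \<U>"
proof -
  obtain diag: "\<forall>U\<in>\<U>. Id_on X \<subseteq> U \<and> U \<subseteq> X \<times> X"
    and sup: "\<forall>U\<in>\<U>. \<forall>V. U \<subseteq> V \<and> V \<subseteq> X \<times> X \<longrightarrow> V \<in> \<U>"
    and int: "\<forall>U\<in>\<U>. \<forall>V\<in>\<U>. \<exists>W\<in>\<U>. W \<subseteq> U \<and> W \<subseteq> V"
    and half: "\<forall>U\<in>\<U>. \<exists>V\<in>\<U>. V O V \<subseteq> U"
    and conv: "\<forall>U\<in>\<U>. converse U \<in> \<U>"
    using assms(1) unfolding uniformity_def by (elim conjE) (rule that)
  show "U \<subseteq> X \<times> X" using diag U by blast
  show "(x, x) \<in> U" if "x \<in> X" using diag U that by blast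
  show "V \<in> \<U>" if "U \<subseteq> V" "V \<subseteq> X \<times> X" using sup U that by blast
  show "\<exists>W\<in>\<U>. W \<subseteq> U \<and> W \<subseteq> V" if "V \<in> \<U>" using int U that by blast
  show "\<exists>V\<in>\<U>. V O V \<subseteq> U" using half U by blast
  show "converse U \<in> \<U>" using conv U by blast
qed

lemma entourage_relcomp:
  assumes u: "uniformity X \<U>" and U: "U \<in> \<U>" and V: "V \<in> \<U>"
  shows "U O V \<in> \<U>"
proof (rule entourage_superset[OF u U])
  show "U \<subseteq> U O V"
    using entourage_refl[OF u V] entourage_subset[OF u U] by blast
  show "U O V \<subseteq> X \<times> X"
    using entourage_subset[OF u U] entourage_subset[OF u V] by blast
qed

lemma openin_utopology:
  assumes u: "uniformity X \<U>"
  shows "openin (utopology X \<U>) W \<longleftrightarrow> W \<subseteq> X \<and> (\<forall>x\<in>W. \<exists>U\<in>\<U>. U `` {x} \<subseteq> W)"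
proof -
  define uopen where "uopen W \<longleftrightarrow> W \<subseteq> X \<and> (\<forall>x\<in>W. \<exists>U\<in>\<U>. U `` {x} \<subseteq> W)" for W
  have "uopen (S \<inter> T)" if S: "uopen S" and T: "uopen T" for S T
    unfolding uopen_def
  proof (intro conjI ballI)
    show "S \<inter> T \<subseteq> X"
      using S T unfolding uopen_def by blast
    fix x assume "x \<in> S \<inter> T"
    then obtain U V where "U \<in> \<U>" "U `` {x} \<subseteq> S" "V \<in> \<U>" "V `` {x} \<subseteq> T"
      using S T unfolding uopen_def by blast
    moreover from entourage_Int[OF u this(1,3)]
    obtain W where "W \<in> \<U>" "W \<subseteq> U" "W \<subseteq> V" by blast
    ultimately show "\<exists>W\<in>\<U>. W `` {x} \<subseteq> S \<inter> T"
      by blast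
  qed
  moreover have "uopen (\<Union>K)" if K: "\<forall>S\<in>K. uopen S" for K
    unfolding uopen_def
  proof (intro conjI ballI)
    show "\<Union>K \<subseteq> X"
      using K unfolding uopen_def by blast
    fix x assume "x \<in> \<Union>K"
    then obtain S where "S \<in> K" "x \<in> S" by blast
    moreover from this obtain U where "U \<in> \<U>" "U `` {x} \<subseteq> S"
      using K unfolding uopen_def by blast
    ultimately show "\<exists>U\<in>\<U>. U `` {x} \<subseteq> \<Union>K"
      by blast
  qed
  ultimately have "istopology uopen"
    unfolding istopology_def by blast
  then show ?thesis
    unfolding utopology_def uopen_def[abs_def] by simp
qed

lemma topspace_utopology:
  assumes "uniformity X \<U>" and "U \<in> \<U>"
  shows "topspace (utopology X \<U>) = X"
proof -
  have "openin (utopology X \<U>) X"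
    using assms by (auto simp: openin_utopology dest: entourage_subset)
  moreover have "topspace (utopology X \<U>) \<subseteq> X"
    unfolding topspace_def using assms(1) by (auto simp: openin_utopology)
  ultimately show ?thesis
    by (auto simp: topspace_def)
qed

text \<open>The witness is the set of points having some entourage ball inside \<open>B(x;V)\<close>; it is open
  because every \<open>U\<close> has a square root \<open>U' O U' \<subseteq> U\<close>.\<close>

lemma openin_utopology_subset_ball:
  assumes u: "uniformity X \<U>" and V: "V \<in> \<U>" and x: "x \<in> X"
  obtains S where "openin (utopology X \<U>) S" "x \<in> S" "S \<subseteq> V `` {x}"
proof
  let ?S = "{z \<in> X. \<exists>U\<in>\<U>. U `` {z} \<subseteq> V `` {x}}"
  show "openin (utopology X \<U>) ?S"
    unfolding openin_utopology[OF u]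
  proof (intro conjI ballI)
    fix z assume "z \<in> ?S"
    then obtain U where U: "U \<in> \<U>" "U `` {z} \<subseteq> V `` {x}" by blast
    then obtain U' where U': "U' \<in> \<U>" "U' O U' \<subseteq> U"
      using entourage_half[OF u] by blast
    have "U' `` {z} \<subseteq> ?S"
      using U U' entourage_subset[OF u U'(1)] by blast
    then show "\<exists>U\<in>\<U>. U `` {z} \<subseteq> ?S"
      using U'(1) by blast
  qed blast
  show "x \<in> ?S"
    using x V by blast
  show "?S \<subseteq> V `` {x}"
    using entourage_refl[OF u] by blast
qed

lemma closure_of_utopology_meets_ball:
  assumes u: "uniformity X \<U>" and V: "V \<in> \<U>"
    and x: "x \<in> utopology X \<U> closure_of A"
  shows "\<exists>a\<in>A. (x, a) \<in> V"
proof -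
  have "x \<in> X"
    using x closure_of_subset_topspace[of "utopology X \<U>" A] topspace_utopology[OF u V] by auto
  then obtain S where "openin (utopology X \<U>) S" "x \<in> S" "S \<subseteq> V `` {x}"
    using openin_utopology_subset_ball[OF u V] by blast
  then show ?thesis
    using x unfolding in_closure_of by blast
qed

lemma Image_closure_of_utopology_subset:
  assumes u: "uniformity X \<U>" and "W \<in> \<U>"
  shows "U `` (utopology X \<U> closure_of A) \<subseteq> (W O U) `` A"
proof
  fix y assume "y \<in> U `` (utopology X \<U> closure_of A)"
  then obtain x where x: "x \<in> utopology X \<U> closure_of A" "(x, y) \<in> U" by blast
  obtain a where "a \<in> A" "(x, a) \<in> converse W"
    using closure_of_utopology_meets_ball[OF u entourage_converse[OF u \<open>W \<in> \<U>\<close>] x(1)] by blast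
  with x(2) show "y \<in> (W O U) `` A" by blast
qed

lemma rotund_base_uniformity:
  assumes u: "uniformity X \<U>"
  shows "rotund_base X \<U> \<U>"
  unfolding rotund_base_def
proof (intro allI impI ballI)
  fix A U W assume "A \<subseteq> X" and U: "U \<in> \<U>" and W: "W \<in> \<U>"
  have "(W O U) `` A \<subseteq> topspace (utopology X \<U>)"
    using entourage_subset[OF u entourage_relcomp[OF u W U]] topspace_utopology[OF u U] by blast
  with Image_closure_of_utopology_subset[OF u W]
  show "U `` (utopology X \<U> closure_of A) \<subseteq> utopology X \<U> closure_of ((W O U) `` A)"
    by (meson closure_of_subset order.trans)
qed

theorem proposition1p9:
  fixes X :: "'a set" and \<U> :: "('a \<times> 'a) set set"
  assumes "uniformity X \<U>"
  shows "rotund X \<U>"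
  unfolding rotund_def
proof (intro exI conjI)
  show "is_base \<U> \<U>"
    unfolding is_base_def by blast
  show "multiplicative \<U>"
    unfolding multiplicative_def using entourage_relcomp[OF assms] by blast
  show "rotund_base X \<U> \<U>"
    using rotund_base_uniformity[OF assms] .
qed

end
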